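(* The metric space $(\mathtt{CA},\delta)$ is not complete: there is a Cauchy sequence in $(\mathtt{CA},\delta)$ that does not converge to any element of $\mathtt{CA}$.
   Context: $\Sigma$ is a finite alphabet with $|\Sigma|\ge2$, $N(r)=[-r,r]$. A cellular automaton (CA) is a map $c:\Sigma^\mathbb{Z}\to\Sigma^\mathbb{Z}$ of the form $c(x)_i=F(x_{[i-r,i+r]})$ for a local function $F:\Sigma^{N(r)}\to\Sigma$. $\mathtt{CA}$ is the set of all CA. For $c,d\in\mathtt{CA}$ with common radius $r$, $D^c_d$ is the set of $w\in\Sigma^{N(r)}$ on which the local rules of $c$ and $d$ give different outputs, and $\delta(c,d)=|D^c_d|/|\Sigma|^{2r+1}$ (independent of $r$). *)

theory Defs
  imports "HOL-Library.FuncSet" Complex_Main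
begin

type_synonym 'a config = "int \<Rightarrow> 'a"

text \<open>Neighbourhood N(r) = [-r,r] and the patterns on it (Sigma^N(r)),
  represented as extensional functions (undefined outside N(r)).\<close>
definition nbhd :: "nat \<Rightarrow> int set" where
  "nbhd r = {- int r .. int r}"

definition patterns :: "nat \<Rightarrow> (int \<Rightarrow> 'a) set" where
  "patterns r = nbhd r \<rightarrow>\<^sub>E (UNIV :: 'a set)"

definition is_CA_radius :: "nat \<Rightarrow> ('a config \<Rightarrow> 'a config) \<Rightarrow> bool" where
  "is_CA_radius r c \<longleftrightarrow>
     (\<exists>F :: (int \<Rightarrow> 'a) \<Rightarrow> 'a. \<forall>x i.
        c x i = F (\<lambda>j. if j \<in> nbhd r then x (i + j) else undefined))"

definition CA :: "('a config \<Rightarrow> 'a config) set" where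
  "CA = {c. \<exists>r. is_CA_radius r c}"

definition local_rule :: "('a config \<Rightarrow> 'a config) \<Rightarrow> (int \<Rightarrow> 'a) \<Rightarrow> 'a" where
  "local_rule c w = c w 0"

definition diff_set :: "nat \<Rightarrow> ('a config \<Rightarrow> 'a config) \<Rightarrow> ('a config \<Rightarrow> 'a config)
    \<Rightarrow> (int \<Rightarrow> 'a) set" where
  "diff_set r c d = {w \<in> patterns r. local_rule c w \<noteq> local_rule d w}"

text \<open>delta(c,d) computed at the least common radius (independent of the radius).\<close>
definition delta :: "('a::finite config \<Rightarrow> 'a config) \<Rightarrow> ('a config \<Rightarrow> 'a config) \<Rightarrow> real" where
  "delta c d = (let r = (LEAST r. is_CA_radius r c \<and> is_CA_radius r d) in
     real (card (diff_set r c d)) / real (card (UNIV :: 'a set)) ^ (2 * r + 1))"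

end

theory Submission
  imports Defs
begin

(* Fix two distinct symbols a, b.  The "pointer automaton" P_n scans the odd cells
   1, 3, ..., 2n-1 to the right of the current cell, stops at the first one not
   holding a, and copies the even cell right behind it; if all n scanned cells hold
   a it copies cell 2n+2.  P_n is a CA of radius exactly 2n+2.

   Cauchy: P_m and P_n can only disagree on a pattern whose first min m n odd cells
   all hold a, so delta(P_m, P_n) <= 2^(-min m n).
   No limit: a CA c of radius K cannot see the cell copied by P_n (n >= K) on the
   patterns whose first K odd cells hold a.  Changing that cell by a fixed-point-free
   permutation g is an injection on these patterns under which P_n changes its output
   and c does not, so P_n and c disagree on at least half of them, which gives
   delta(P_n, c) >= 1 / (2 |Sigma|^K) for all n >= K. *)


definition common_radius :: "('a config \<Rightarrow> 'a config) \<Rightarrow> ('a config \<Rightarrow> 'a config) \<Rightarrow> nat" where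
  "common_radius c d = (LEAST r. is_CA_radius r c \<and> is_CA_radius r d)"

lemma delta_common_radius:
  fixes c d :: "'a::finite config \<Rightarrow> 'a config"
  shows "delta c d = real (card (diff_set (common_radius c d) c d))
                 / real (card (UNIV :: 'a::finite set)) ^ (2 * common_radius c d + 1)"
  unfolding delta_def common_radius_def Let_def ..

lemma radius_mono:
  assumes "is_CA_radius r c" "r \<le> r'"
  shows "is_CA_radius r' c"
proof -
  obtain F where F: "\<And>x i. c x i = F (\<lambda>j. if j \<in> nbhd r then x (i + j) else undefined)"
    using assms(1) unfolding is_CA_radius_def by blast
  have sub: "nbhd r \<subseteq> nbhd r'" using assms(2) unfolding nbhd_def by auto
  let ?G = "\<lambda>w. F (\<lambda>j. if j \<in> nbhd r then w j else undefined)"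
  have factor: "c x i = ?G (\<lambda>j. if j \<in> nbhd r' then x (i + j) else undefined)" for x i
    by (subst F, rule arg_cong[where f = F], rule ext) (use sub in auto)
  show ?thesis unfolding is_CA_radius_def by (intro exI[of _ ?G] allI) (rule factor)
qed

lemma common_radius_is_radius:
  assumes "is_CA_radius r c" "is_CA_radius r' d"
  shows "is_CA_radius (common_radius c d) c \<and> is_CA_radius (common_radius c d) d"
  unfolding common_radius_def
  by (rule LeastI[of _ "max r r'"])
    (use radius_mono[OF assms(1), of "max r r'"] radius_mono[OF assms(2), of "max r r'"] in auto)

lemma CA_reads_nbhd:
  assumes "is_CA_radius r c" "\<And>j. j \<in> nbhd r \<Longrightarrow> x (i + j) = y (i + j)"
  shows "c x i = c y i"
proof -
  obtain F where "\<And>x i. c x i = F (\<lambda>j. if j \<in> nbhd r then x (i + j) else undefined)"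
    using assms(1) unfolding is_CA_radius_def by blast
  moreover have "(\<lambda>j. if j \<in> nbhd r then x (i + j) else undefined)
               = (\<lambda>j. if j \<in> nbhd r then y (i + j) else undefined)"
    using assms(2) by auto
  ultimately show ?thesis by metis
qed

lemma finite_patterns: "finite (patterns r :: (int \<Rightarrow> 'a::finite) set)"
  unfolding patterns_def nbhd_def by (intro finite_PiE) auto

lemma card_patterns_fixing:
  fixes a :: "'a::finite"
  assumes "T \<subseteq> nbhd r"
  shows "card {w \<in> patterns r. \<forall>t\<in>T. w t = a} = card (UNIV :: 'a set) ^ (2 * r + 1 - card T)"
proof -
  have fin: "finite (nbhd r)" unfolding nbhd_def by simp
  have "{w \<in> patterns r. \<forall>t\<in>T. w t = a} = PiE (nbhd r) (\<lambda>t. if t \<in> T then {a} else UNIV)"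
    using assms unfolding patterns_def by (auto simp: PiE_iff extensional_def split: if_splits)
  then have "card {w \<in> patterns r. \<forall>t\<in>T. w t = a}
             = (\<Prod>t\<in>nbhd r. card (if t \<in> T then {a} else (UNIV :: 'a set)))"
    by (simp add: card_PiE[OF fin])
  also have "\<dots> = (\<Prod>t\<in>nbhd r. if t \<in> T then 1 else card (UNIV :: 'a set))"
    by (rule prod.cong) auto
  also have "\<dots> = card (UNIV :: 'a set) ^ card (nbhd r - T)"
    using fin by (simp add: prod.If_cases Int_absorb1 assms) (metis Diff_eq)
  also have "card (nbhd r - T) = 2 * r + 1 - card T"
    using assms fin by (simp add: card_Diff_subset finite_subset nbhd_def)
  finally show ?thesis .
qed

lemma card_le_double_by_injection:
  assumes "finite E" "finite D" "inj_on \<phi> E" "\<And>w. w \<in> E \<Longrightarrow> w \<in> D \<or> \<phi> w \<in> D"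
  shows "card E \<le> 2 * card D"
proof -
  have "card E \<le> card (D \<union> {w \<in> E. \<phi> w \<in> D})"
    using assms(1,2,4) by (intro card_mono) auto
  also have "\<dots> \<le> card D + card {w \<in> E. \<phi> w \<in> D}" by (rule card_Un_le)
  also have "card {w \<in> E. \<phi> w \<in> D} \<le> card D"
    using assms(2,3) by (intro card_inj_on_le[of \<phi>]) (auto intro: inj_on_subset)
  finally show ?thesis by simp
qed

text \<open>Every finite type with at least two elements has a fixed-point-free
  permutation (a cyclic shift of an enumeration).\<close>
lemma fixpoint_free_injection:
  assumes "card (UNIV :: 'a set) \<ge> 2"
  obtains g :: "'a::finite \<Rightarrow> 'a" where "inj g" "\<And>v. g v \<noteq> v"
proof -
  define q where "q = card (UNIV :: 'a set)"
  obtain h :: "'a \<Rightarrow> nat" where h: "bij_betw h UNIV {0..<q}"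
    unfolding q_def using ex_bij_betw_finite_nat[of "UNIV :: 'a set"] by auto
  define g where "g v = inv_into UNIV h ((h v + 1) mod q)" for v
  have q2: "q \<ge> 2" using assms q_def by simp
  have hg: "h (g v) = (h v + 1) mod q" for v
    unfolding g_def using q2 by (intro bij_betw_inv_into_right[OF h]) auto
  have hlt: "h v < q" for v using h by (auto simp: bij_betw_def)
  have hinj: "inj h" using h by (auto simp: bij_betw_def)
  have "inj g"
  proof (rule injI)
    fix x y assume "g x = g y"
    then have "(h x + 1) mod q = (h y + 1) mod q" using hg by metis
    then have "h x = h y" using hlt[of x] hlt[of y]
      by (cases "h x + 1 = q"; cases "h y + 1 = q") auto
    then show "x = y" using hinj by (simp add: inj_eq)
  qed
  moreover have "g v \<noteq> v" for v
  proof
    assume "g v = v"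
    then have "h v = (h v + 1) mod q" using hg by metis
    then show False using hlt[of v] q2 by (cases "h v + 1 = q") auto
  qed
  ultimately show ?thesis using that by blast
qed


section \<open>The pointer automata\<close>

fun scan :: "'a \<Rightarrow> nat \<Rightarrow> 'a config \<Rightarrow> nat \<Rightarrow> nat" where
  "scan a 0 x j = 2 * j + 2"
| "scan a (Suc n) x j = (if x (int (2 * j + 1)) \<noteq> a then 2 * j + 2 else scan a n x (j + 1))"

definition pointer_CA :: "'a \<Rightarrow> nat \<Rightarrow> 'a config \<Rightarrow> 'a config" where
  "pointer_CA a n x i = x (i + int (scan a n (\<lambda>t. x (i + t)) 0))"

lemma scan_bounds: "2 * j + 2 \<le> scan a n x j \<and> scan a n x j \<le> 2 * (j + n) + 2"
proof (induction n arbitrary: j)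
  case (Suc n)
  then show ?case using Suc.IH[of "j + 1"] by auto
qed simp

lemma scan_even: "even (scan a n x j)"
  by (induction n arbitrary: j) auto

lemma scan_local:
  assumes "\<And>i. i < n \<Longrightarrow> x (int (2 * (j + i) + 1)) = y (int (2 * (j + i) + 1))"
  shows "scan a n x j = scan a n y j"
  using assms
proof (induction n arbitrary: j)
  case (Suc n)
  have "scan a n x (j + 1) = scan a n y (j + 1)"
    using Suc.IH[of "j + 1"] Suc.prems[of "Suc _"] by (simp add: algebra_simps)
  then show ?case using Suc.prems[of 0] by simp
qed simp

lemma scan_all_a:
  assumes "\<And>i. i < n \<Longrightarrow> x (int (2 * (j + i) + 1)) = a"
  shows "scan a n x j = 2 * (j + n) + 2"
  using assms
proof (induction n arbitrary: j)
  case (Suc n)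
  have "scan a n x (j + 1) = 2 * (j + 1 + n) + 2"
    using Suc.IH[of "j + 1"] Suc.prems[of "Suc _"] by (simp add: algebra_simps)
  then show ?case using Suc.prems[of 0] by simp
qed simp

lemma scan_beyond_prefix:
  assumes "\<And>i. i < K \<Longrightarrow> x (int (2 * (j + i) + 1)) = a" "K \<le> n"
  shows "2 * (j + K) + 2 \<le> scan a n x j"
  using assms
proof (induction n arbitrary: j K)
  case (Suc n)
  show ?case
  proof (cases K)
    case 0
    then show ?thesis using scan_bounds[of j a "Suc n" x] by simp
  next
    case (Suc K')
    have "x (int (2 * (j + 1 + i) + 1)) = a" if "i < K'" for i
      using Suc.prems(1)[of "Suc i"] Suc that by simp
    then have "2 * (j + 1 + K') + 2 \<le> scan a n x (j + 1)"
      using Suc.IH[of K' "j + 1"] Suc.prems Suc by simp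
    then show ?thesis using Suc.prems(1)[of 0] Suc by simp
  qed
qed simp

lemma scan_differ:
  assumes "scan a m x j \<noteq> scan a n x j" "i < min m n"
  shows "x (int (2 * (j + i) + 1)) = a"
  using assms
proof (induction m arbitrary: n j i)
  case (Suc m)
  then obtain n' where n: "n = Suc n'" by (cases n) auto
  have e: "x (int (2 * j + 1)) = a" using Suc.prems n by (auto split: if_splits)
  show ?case
  proof (cases i)
    case (Suc i')
    have "scan a m x (j + 1) \<noteq> scan a n' x (j + 1)" using Suc.prems n e by simp
    from Suc.IH[OF this, of i'] Suc.prems Suc n show ?thesis by (simp add: algebra_simps)
  qed (use e in simp)
qed simp

lemma local_rule_pointer_CA: "local_rule (pointer_CA a n) w = w (int (scan a n w 0))"
  by (simp add: local_rule_def pointer_CA_def)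

lemma pointer_CA_radius: "is_CA_radius (2 * n + 2) (pointer_CA a n)"
proof -
  let ?G = "\<lambda>w. w (int (scan a n w 0))"
  have factor: "pointer_CA a n x i = ?G (\<lambda>j. if j \<in> nbhd (2 * n + 2) then x (i + j) else undefined)"
    for x i
  proof -
    let ?W = "\<lambda>j. if j \<in> nbhd (2 * n + 2) then x (i + j) else undefined"
    have "scan a n ?W 0 = scan a n (\<lambda>t. x (i + t)) 0"
      by (rule scan_local) (auto simp: nbhd_def)
    moreover have "scan a n ?W 0 \<le> 2 * n + 2" using scan_bounds[of 0 a n ?W] by simp
    ultimately show ?thesis by (simp add: pointer_CA_def nbhd_def)
  qed
  show ?thesis unfolding is_CA_radius_def by (intro exI[of _ ?G] allI) (rule factor)
qed

lemma pointer_CA_in_CA: "pointer_CA a n \<in> CA"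
  unfolding CA_def using pointer_CA_radius[of n a] by blast

text \<open>The radius 2n+2 is optimal: on the configuration constantly a the pointer
  automaton copies cell 2n+2, so changing that cell changes the output.\<close>
lemma pointer_CA_radius_lower:
  assumes "is_CA_radius r (pointer_CA a n)" "(b :: 'a) \<noteq> a"
  shows "2 * n + 2 \<le> r"
proof (rule ccontr)
  assume small: "\<not> 2 * n + 2 \<le> r"
  define x :: "'a config" where "x = (\<lambda>_. a)"
  define y where "y = x(int (2 * n + 2) := b)"
  have "pointer_CA a n x 0 = pointer_CA a n y 0"
    using small by (intro CA_reads_nbhd[OF assms(1)]) (auto simp: y_def nbhd_def)
  moreover have "pointer_CA a n x 0 = a" by (simp add: pointer_CA_def x_def)
  moreover have "scan a n y 0 = 2 * n + 2" using scan_all_a[of n y 0 a] by (simp add: x_def y_def)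
  then have "pointer_CA a n y 0 = y (int (2 * n + 2))" by (simp add: pointer_CA_def)
  then have "pointer_CA a n y 0 = b" by (simp add: y_def)
  ultimately show False using assms(2) by simp
qed

lemma common_radius_pointer_CA:
  assumes "is_CA_radius K c" "(b :: 'a) \<noteq> a"
  shows "is_CA_radius (common_radius (pointer_CA a n) c) c"
    and "2 * n + 2 \<le> common_radius (pointer_CA a n) c"
  using common_radius_is_radius[OF pointer_CA_radius assms(1)]
    pointer_CA_radius_lower[OF _ assms(2)] by blast+


definition odd_cells :: "nat \<Rightarrow> int set" where
  "odd_cells k = (\<lambda>i. int (2 * i + 1)) ` {..<k}"

definition prefixed :: "nat \<Rightarrow> 'a \<Rightarrow> nat \<Rightarrow> (int \<Rightarrow> 'a) set" where
  "prefixed r a k = {w \<in> patterns r. \<forall>t\<in>odd_cells k. w t = a}"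

lemma card_prefixed:
  fixes a :: "'a::finite"
  assumes "2 * k \<le> r"
  shows "card (prefixed r a k) = card (UNIV :: 'a set) ^ (2 * r + 1 - k)"
proof -
  have "inj_on (\<lambda>i. int (2 * i + 1)) {..<k}" by (auto simp: inj_on_def)
  then have "card (odd_cells k) = k" by (simp add: odd_cells_def card_image)
  moreover have "odd_cells k \<subseteq> nbhd r" using assms by (auto simp: odd_cells_def nbhd_def)
  ultimately show ?thesis unfolding prefixed_def by (simp add: card_patterns_fixing)
qed


section \<open>The pointer automata form a Cauchy sequence\<close>

lemma fraction_le_inverse_power:
  assumes "card D \<le> (q :: nat) ^ (N - k)" "k \<le> N" "q \<ge> 2"
  shows "real (card D) / real q ^ N \<le> 1 / 2 ^ k"
proof -
  have qp: "real q > 0" using assms by simp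
  have "real (card D) / real q ^ N \<le> real q ^ (N - k) / real q ^ N"
    using assms(1) qp by (simp add: divide_right_mono of_nat_le_iff[symmetric] del: of_nat_le_iff)
  also have "\<dots> = 1 / real q ^ k" using qp assms(2) by (simp add: power_diff)
  also have "\<dots> \<le> 1 / 2 ^ k" using assms(3) by (intro divide_left_mono power_mono) auto
  finally show ?thesis .
qed

lemma diff_set_pointer_CA:
  "diff_set r (pointer_CA a m) (pointer_CA a n) \<subseteq> prefixed r a (min m n)"
proof
  fix w assume "w \<in> diff_set r (pointer_CA a m) (pointer_CA a n)"
  then have w: "w \<in> patterns r" "scan a m w 0 \<noteq> scan a n w 0"
    by (auto simp: diff_set_def local_rule_pointer_CA)
  then show "w \<in> prefixed r a (min m n)"
    using scan_differ[OF w(2)] by (auto simp: prefixed_def odd_cells_def)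
qed

lemma delta_pointer_CA_upper:
  fixes a b :: "'a::finite"
  assumes "b \<noteq> a" "card (UNIV :: 'a set) \<ge> 2"
  shows "delta (pointer_CA a m) (pointer_CA a n) \<le> 1 / 2 ^ min m n"
proof -
  define r where "r = common_radius (pointer_CA a m) (pointer_CA a n)"
  have "is_CA_radius r (pointer_CA a m)" "is_CA_radius r (pointer_CA a n)"
    unfolding r_def using common_radius_is_radius[OF pointer_CA_radius[of m a] pointer_CA_radius[of n a]]
    by blast+
  then have "2 * m + 2 \<le> r" "2 * n + 2 \<le> r" using pointer_CA_radius_lower[OF _ assms(1)] by blast+
  then have prefix_fits: "2 * min m n \<le> r" by simp
  have "card (diff_set r (pointer_CA a m) (pointer_CA a n)) \<le> card (prefixed r a (min m n))"
    by (intro card_mono diff_set_pointer_CA) (auto simp: prefixed_def intro: finite_subset[OF _ finite_patterns])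
  also have "\<dots> = card (UNIV :: 'a set) ^ (2 * r + 1 - min m n)"
    by (rule card_prefixed[OF prefix_fits])
  finally show ?thesis
    unfolding delta_common_radius r_def[symmetric]
    using prefix_fits by (intro fraction_le_inverse_power assms(2)) auto
qed

lemma pointer_CA_Cauchy:
  fixes a b :: "'a::finite"
  assumes "b \<noteq> a" "card (UNIV :: 'a set) \<ge> 2" "\<epsilon> > 0"
  shows "\<exists>N. \<forall>m\<ge>N. \<forall>n\<ge>N. delta (pointer_CA a m) (pointer_CA a n) < \<epsilon>"
proof -
  obtain N where N: "(1 / 2 :: real) ^ N < \<epsilon>" using real_arch_pow_inv[of \<epsilon> "1 / 2"] assms(3) by auto
  have "delta (pointer_CA a m) (pointer_CA a n) < \<epsilon>" if "m \<ge> N" "n \<ge> N" for m n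
  proof -
    have "delta (pointer_CA a m) (pointer_CA a n) \<le> 1 / 2 ^ min m n"
      by (rule delta_pointer_CA_upper[OF assms(1,2)])
    also have "\<dots> \<le> 1 / 2 ^ N" using that by (intro divide_left_mono power_increasing) auto
    also have "\<dots> < \<epsilon>" using N by (simp add: power_one_over)
    finally show ?thesis .
  qed
  then show ?thesis by blast
qed


section \<open>The pointer automata have no limit\<close>

definition flip :: "('a \<Rightarrow> 'a) \<Rightarrow> 'a \<Rightarrow> nat \<Rightarrow> (int \<Rightarrow> 'a) \<Rightarrow> (int \<Rightarrow> 'a)" where
  "flip g a n w = w(int (scan a n w 0) := g (w (int (scan a n w 0))))"

text \<open>The flipped cell is even, so it is not read by the scan and no odd cell changes.\<close>
lemma flip_keeps_odd_cells: "odd t \<Longrightarrow> flip g a n w t = w t"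
  using scan_even[of a n w 0] by (auto simp: flip_def)

lemma scan_flip: "scan a n (flip g a n w) 0 = scan a n w 0"
  by (rule scan_local) (simp add: flip_keeps_odd_cells)

lemma inj_flip:
  assumes "inj g"
  shows "inj (flip g a n)"
proof (rule injI)
  fix v w assume eq: "flip g a n v = flip g a n w"
  then have p: "scan a n v 0 = scan a n w 0" by (metis scan_flip)
  then have "g (v (int (scan a n v 0))) = g (w (int (scan a n v 0)))"
    using fun_cong[OF eq, of "int (scan a n v 0)"] by (simp add: flip_def)
  then have "v (int (scan a n v 0)) = w (int (scan a n v 0))" using assms by (simp add: inj_eq)
  with eq p show "v = w" unfolding flip_def by (metis fun_upd_triv fun_upd_upd)
qed

text \<open>On a-prefixed patterns of length K >= the radius of c, the copied cell lies
  outside the view of c: flipping it changes the output of P_n but not that of c.\<close>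
lemma pointer_CA_or_flip_differs:
  assumes c: "is_CA_radius K c" and "K \<le> n" and g: "\<And>v. g v \<noteq> v"
    and prefix: "\<And>i. i < K \<Longrightarrow> w (int (2 * i + 1)) = a"
  shows "local_rule (pointer_CA a n) w \<noteq> local_rule c w
       \<or> local_rule (pointer_CA a n) (flip g a n w) \<noteq> local_rule c (flip g a n w)"
proof -
  have "2 * K + 2 \<le> scan a n w 0" using scan_beyond_prefix[of K w 0 a n] prefix assms(2) by simp
  then have "int (scan a n w 0) \<notin> nbhd K" by (simp add: nbhd_def)
  then have "local_rule c (flip g a n w) = local_rule c w"
    unfolding local_rule_def by (intro CA_reads_nbhd[OF c]) (auto simp: flip_def)
  moreover have "local_rule (pointer_CA a n) (flip g a n w) \<noteq> local_rule (pointer_CA a n) w"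
    unfolding local_rule_pointer_CA scan_flip using g by (simp add: flip_def)
  ultimately show ?thesis by metis
qed

lemma flip_prefixed:
  assumes "w \<in> prefixed r a k" "2 * n + 2 \<le> r"
  shows "flip g a n w \<in> prefixed r a k"
proof -
  have "int (scan a n w 0) \<in> nbhd r" using scan_bounds[of 0 a n w] assms(2) by (simp add: nbhd_def)
  moreover have "\<forall>t\<in>odd_cells k. flip g a n w t = w t"
    by (auto simp: odd_cells_def flip_keeps_odd_cells)
  ultimately show ?thesis using assms(1)
    by (auto simp: prefixed_def patterns_def flip_def PiE_iff extensional_def)
qed

text \<open>Consequently P_n (n >= K) disagrees with a CA of radius K on at least half of
  the patterns with an a-prefix of length K, a proportion 1/(2|Sigma|^K).\<close>
lemma delta_pointer_CA_lower:
  fixes a b :: "'a::finite"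
  assumes "b \<noteq> a" "card (UNIV :: 'a set) \<ge> 2" "is_CA_radius K c" "K \<le> n"
  shows "1 / (2 * real (card (UNIV :: 'a set)) ^ K) \<le> delta (pointer_CA a n) c"
proof -
  define q where "q = card (UNIV :: 'a set)"
  define r where "r = common_radius (pointer_CA a n) c"
  define D where "D = diff_set r (pointer_CA a n) c"
  have cr: "is_CA_radius r c" "2 * n + 2 \<le> r"
    unfolding r_def using common_radius_pointer_CA[OF assms(3,1)] by blast+
  obtain g :: "'a \<Rightarrow> 'a" where g: "inj g" "\<And>v. g v \<noteq> v"
    using fixpoint_free_injection[OF assms(2)] by blast
  have finD: "finite D" unfolding D_def diff_set_def by (rule finite_subset[OF _ finite_patterns]) auto
  have "card (prefixed r a K) \<le> 2 * card D"
  proof (rule card_le_double_by_injection[OF _ finD inj_on_subset[OF inj_flip[OF g(1)]]])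
    fix w assume w: "w \<in> prefixed r a K"
    then have "\<And>i. i < K \<Longrightarrow> w (int (2 * i + 1)) = a" by (auto simp: prefixed_def odd_cells_def)
    then have "local_rule (pointer_CA a n) w \<noteq> local_rule c w
       \<or> local_rule (pointer_CA a n) (flip g a n w) \<noteq> local_rule c (flip g a n w)"
      by (rule pointer_CA_or_flip_differs[OF assms(3,4) g(2)])
    then show "w \<in> D \<or> flip g a n w \<in> D"
      using w flip_prefixed[OF w cr(2)] by (auto simp: D_def diff_set_def prefixed_def)
  qed (auto simp: prefixed_def intro: finite_subset[OF _ finite_patterns])
  then have count: "real q ^ (2 * r + 1 - K) \<le> 2 * real (card D)"
    using card_prefixed[of K r a] cr(2) assms(4) unfolding q_def by (simp flip: of_nat_power)
  have qp: "real q > 0" using assms(2) q_def by simp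
  have "1 / (2 * real q ^ K) = real q ^ (2 * r + 1 - K) / (2 * real q ^ (2 * r + 1))"
    using qp cr(2) assms(4) by (simp add: power_diff)
  also have "\<dots> \<le> real (card D) / real q ^ (2 * r + 1)"
    using count qp by (simp add: divide_simps)
  finally show ?thesis unfolding delta_common_radius r_def[symmetric] D_def q_def .
qed

lemma pointer_CA_no_limit:
  fixes a b :: "'a::finite"
  assumes "b \<noteq> a" "card (UNIV :: 'a set) \<ge> 2" "c \<in> CA"
  shows "\<not> (\<lambda>n. delta (pointer_CA a n) c) \<longlonglongrightarrow> 0"
proof
  assume lim: "(\<lambda>n. delta (pointer_CA a n) c) \<longlonglongrightarrow> 0"
  obtain K where K: "is_CA_radius K c" using assms(3) unfolding CA_def by blast
  define e where "e = 1 / (2 * real (card (UNIV :: 'a set)) ^ K)"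
  have "e > 0" unfolding e_def using assms(2) by simp
  from LIMSEQ_D[OF lim this] obtain N where N: "\<And>n. n \<ge> N \<Longrightarrow> norm (delta (pointer_CA a n) c) < e"
    by auto
  have "e \<le> delta (pointer_CA a (max N K)) c"
    unfolding e_def by (rule delta_pointer_CA_lower[OF assms(1,2) K]) simp
  with N[of "max N K"] show False by simp
qed


theorem mainTheorem10:
  assumes "card (UNIV :: 'a::finite set) \<ge> 2"
  shows "\<exists>s :: nat \<Rightarrow> ('a config \<Rightarrow> 'a config).
           (\<forall>n. s n \<in> CA) \<and>
           (\<forall>\<epsilon>>0. \<exists>N. \<forall>m\<ge>N. \<forall>n\<ge>N. delta (s m) (s n) < \<epsilon>) \<and>
           \<not> (\<exists>c\<in>CA. (\<lambda>n. delta (s n) c) \<longlonglongrightarrow> 0)"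
proof -
  obtain a b :: 'a where ab: "b \<noteq> a"
    using assms card_le_Suc0_iff_eq[of "UNIV :: 'a set"] by force
  have "\<forall>n. pointer_CA a n \<in> CA" by (simp add: pointer_CA_in_CA)
  moreover have "\<forall>\<epsilon>>0. \<exists>N. \<forall>m\<ge>N. \<forall>n\<ge>N. delta (pointer_CA a m) (pointer_CA a n) < \<epsilon>"
    using pointer_CA_Cauchy[OF ab assms] by blast
  moreover have "\<not> (\<exists>c\<in>CA. (\<lambda>n. delta (pointer_CA a n) c) \<longlonglongrightarrow> 0)"
    using pointer_CA_no_limit[OF ab assms] by blast
  ultimately show ?thesis by blast
qed

end
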